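(* Let $\alpha=\log_4(3)$. There exists a constant $C>1$ such that for all $0<r<1$, $$\frac1C\, r^{\frac{\alpha-1}{\alpha}}\le \Lambda(B(S,r),r)\le C\, r^{\frac{\alpha-1}{\alpha}}.$$
   Context: Identify $\mathbb{R}^2$ with $\mathbb{C}$. $S$ denotes the von Koch curve: the unique nonempty compact set with $S=\bigcup_{i=1}^4 f_i(S)$, where $f_1(z)=z/3$, $f_2(z)=\tfrac13+e^{i\pi/3}z/3$, $f_3(z)=\tfrac12+\tfrac{\sqrt3}{6}i+e^{-i\pi/3}z/3$, $f_4(z)=\tfrac23+z/3$. For $A\subset\mathbb{R}^2$, $B(A,r):=\{x:\mathrm{dist}(x,A)\le r\}$. A rectifiable curve is the image of a Lipschitz map $[0,1]\to\mathbb{R}^2$. $\Lambda(E,r):=\inf\{\mathcal{H}^1(\Gamma):\Gamma \text{ a rectifiable curve with } B(\Gamma,r)\supset E\}$. *)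

theory Defs
  imports "HOL-Analysis.Analysis"
begin

definition koch_map :: "nat \<Rightarrow> complex \<Rightarrow> complex" where
  "koch_map i z =
     (if i = 1 then z / 3
      else if i = 2 then 1/3 + cis (pi/3) * z / 3
      else if i = 3 then 1/2 + complex_of_real (sqrt 3 / 6) * \<i> + cis (- pi/3) * z / 3
      else 2/3 + z / 3)"

definition koch_curve :: "complex set" where
  "koch_curve = (THE K. K \<noteq> {} \<and> compact K \<and> K = (\<Union>i\<in>{1..4}. koch_map i ` K))"

definition nbhd :: "complex set \<Rightarrow> real \<Rightarrow> complex set" where
  "nbhd A r = {x. infdist x A \<le> r}"

text \<open>One-dimensional Hausdorff measure (normalised as sum of diameters of countable covers).\<close>
definition hausdorff1 :: "complex set \<Rightarrow> ennreal" where
  "hausdorff1 E = (SUP \<delta>\<in>{0<..}.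
      INF U\<in>{U :: nat \<Rightarrow> complex set. E \<subseteq> (\<Union>i. U i) \<and> (\<forall>i. bounded (U i) \<and> diameter (U i) \<le> \<delta>)}.
        (\<Sum>i. ennreal (diameter (U i))))"

definition rectifiable_curve :: "complex set \<Rightarrow> bool" where
  "rectifiable_curve \<Gamma> \<longleftrightarrow> (\<exists>g :: real \<Rightarrow> complex. \<exists>L. lipschitz_on L {0..1} g \<and> \<Gamma> = g ` {0..1})"

definition Lambda :: "complex set \<Rightarrow> real \<Rightarrow> ennreal" where
  "Lambda E r = (INF \<Gamma>\<in>{\<Gamma>. rectifiable_curve \<Gamma> \<and> E \<subseteq> nbhd \<Gamma> r}. hausdorff1 \<Gamma>)"

end

(*
  A curve whose r-neighbourhood covers that of the von Koch curve S passes within r of every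
  point of S.  For the upper bound take the m-th polygonal approximation of S with 3^-m ~ r: it
  is a Lipschitz image of [0,1] of length ~ (4/3)^m, and every point within rho >= 3^-m of S is
  within rho of it.  For the lower bound take the 4^m images of the apex of S under the words of
  length m, with 3^-m ~ r: they are ~ 3^-m apart, so a connected curve passing near all of them
  has length ~ 4^m r.  Both bounds are of order r^(1 - log 3 4) = r^((alpha - 1)/alpha).
*)
theory Submission
  imports Defs
begin

section \<open>The four similarities\<close>

lemma Re_koch_map: "Re (koch_map i z) =
  (if i = 1 then Re z / 3 else if i = 2 then 1/3 + (Re z/2 - sqrt 3 * Im z/2)/3
   else if i = 3 then 1/2 + (Re z/2 + sqrt 3 * Im z/2)/3 else 2/3 + Re z/3)"
  by (simp add: koch_map_def cis.ctr cos_60 sin_60 field_simps)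

lemma Im_koch_map: "Im (koch_map i z) =
  (if i = 1 then Im z / 3 else if i = 2 then (sqrt 3 * Re z/2 + Im z/2)/3
   else if i = 3 then sqrt 3/6 + (- sqrt 3 * Re z/2 + Im z/2)/3 else Im z/3)"
  by (simp add: koch_map_def cis.ctr cos_60 sin_60 field_simps)

lemma koch_map_affine: "\<exists>a c. norm c = 1 \<and> (\<forall>z. koch_map i z = a + c * z / 3)"
proof -
  define c where "c = (if i = 1 then 1 else if i = 2 then cis (pi/3)
     else if i = 3 then cis (-pi/3) else (1::complex))"
  define a where "a = (if i = 1 then 0 else if i = 2 then 1/3
     else if i = 3 then 1/2 + complex_of_real (sqrt 3 / 6) * \<i> else 2/3)"
  have "norm c = 1" "\<forall>z. koch_map i z = a + c * z / 3"
    by (simp_all add: koch_map_def a_def c_def)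
  then show ?thesis by blast
qed

lemma dist_koch_map: "dist (koch_map i z) (koch_map i w) = dist z w / 3"
proof -
  obtain a c where c: "norm c = 1" "\<And>z. koch_map i z = a + c * z / 3"
    using koch_map_affine by blast
  have "koch_map i z - koch_map i w = c * ((z - w) / 3)"
    by (simp add: c(2) field_simps)
  then have "norm (koch_map i z - koch_map i w) = norm c * norm ((z - w) / 3)"
    by (simp only: norm_mult)
  then show ?thesis by (simp add: dist_norm norm_divide c(1))
qed

lemma koch_map_surj: "surj (koch_map i)"
proof -
  obtain a c where c: "norm c = 1" "\<And>z. koch_map i z = a + c * z / 3"
    using koch_map_affine by blast
  then have "c \<noteq> 0" by auto
  then have "koch_map i (3 * (x - a) / c) = x" for x by (simp add: c(2) field_simps)
  then show ?thesis unfolding surj_def by metis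
qed

lemma continuous_on_koch_map: "continuous_on S (koch_map i)"
  by (rule lipschitz_on_continuous_on[of "1/3"]) (simp add: lipschitz_on_def dist_koch_map)

lemma koch_map_fixpoints: "koch_map 1 0 = 0" "koch_map 4 1 = 1"
  by (simp_all add: koch_map_def)

lemma koch_map_endpoints:
  "koch_map 1 1 = koch_map 2 0" "koch_map 2 1 = koch_map 3 0" "koch_map 3 1 = koch_map 4 0"
  by (simp_all add: complex_eq_iff Re_koch_map Im_koch_map)

lemma dist_koch_map_half: "dist (koch_map i z) (1/2) \<le> 1/3 + dist z (1/2) / 3"
proof -
  have "dist (koch_map i (1/2)) (1/2) = sqrt ((Re (koch_map i (1/2)) - 1/2)^2 + (Im (koch_map i (1/2)))^2)"
    by (simp add: dist_norm cmod_def)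
  also have "\<dots> \<le> sqrt (1/9)"
    by (rule real_sqrt_le_mono) (simp add: Re_koch_map Im_koch_map power2_eq_square)
  finally have "dist (koch_map i (1/2)) (1/2) \<le> 1/3" by (simp add: real_sqrt_divide)
  then show ?thesis
    using dist_triangle[of "koch_map i z" "1/2" "koch_map i (1/2)"] by (simp add: dist_koch_map)
qed

section \<open>The von Koch curve as an attractor\<close>

text \<open>A point of \<open>K1\<close> farthest from \<open>K2\<close> is the image of a point of \<open>K1\<close> that is at most as far,
  so the contraction forces that distance to vanish.\<close>
lemma attractor_subset:
  fixes f :: "'i \<Rightarrow> 'a::heine_borel \<Rightarrow> 'a"
  assumes contr: "\<And>i x y. i \<in> I \<Longrightarrow> dist (f i x) (f i y) \<le> c * dist x y" and "0 \<le> c" "c < 1"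
    and K1: "compact K1" "K1 = (\<Union>i\<in>I. f i ` K1)"
    and K2: "compact K2" "K2 \<noteq> {}" "K2 = (\<Union>i\<in>I. f i ` K2)"
  shows "K1 \<subseteq> K2"
proof (cases "K1 = {}")
  case False
  have cl2: "closed K2" using K2(1) compact_imp_closed by blast
  obtain k where k: "k \<in> K1" "\<And>y. y \<in> K1 \<Longrightarrow> infdist y K2 \<le> infdist k K2"
    using continuous_attains_sup[OF K1(1) False, of "\<lambda>x. infdist x K2"]
      continuous_on_infdist[OF continuous_on_id] by force
  obtain i k0 where ik: "i \<in> I" "k0 \<in> K1" "k = f i k0"
    using k(1) K1(2) by blast
  obtain a where a: "a \<in> K2" "infdist k0 K2 = dist k0 a"
    using infdist_attains_inf[OF cl2 K2(2)] by metis
  have "f i a \<in> K2" using K2(3) ik(1) a(1) by blast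
  then have "infdist k K2 \<le> dist k (f i a)" by (rule infdist_le)
  also have "\<dots> \<le> c * infdist k0 K2" using ik contr a(2) by simp
  also have "\<dots> \<le> c * infdist k K2"
    using k(2)[OF ik(2)] \<open>0 \<le> c\<close> by (rule mult_left_mono)
  finally have "infdist k K2 \<le> 0"
    using \<open>c < 1\<close> infdist_nonneg[of k K2] by (smt (verit) mult_le_cancel_right1)
  then have "infdist y K2 = 0" if "y \<in> K1" for y
    using k(2)[OF that] infdist_nonneg[of y K2] by linarith
  then show ?thesis using in_closed_iff_infdist_zero[OF cl2 K2(2)] by blast
qed simp

lemma contraction_fixpoint_mem:
  fixes f :: "'a::heine_borel \<Rightarrow> 'a"
  assumes K: "closed K" "K \<noteq> {}" "f ` K \<subseteq> K"
    and contr: "\<And>x y. dist (f x) (f y) \<le> c * dist x y" and "c < 1" and "f p = p"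
  shows "p \<in> K"
proof -
  obtain k where k: "k \<in> K" "infdist p K = dist p k"
    using infdist_attains_inf[OF K(1,2)] by metis
  have "infdist p K \<le> dist p (f k)" using K(3) k(1) by (intro infdist_le) auto
  also have "\<dots> \<le> c * dist p k" using contr[of p k] \<open>f p = p\<close> by simp
  finally have "dist p k = 0"
    using k(2) \<open>c < 1\<close> zero_le_dist[of p k] by (smt (verit) mult_le_cancel_right1)
  then show ?thesis using k(1) by simp
qed

definition koch_invariant :: "complex set \<Rightarrow> bool" where
  "koch_invariant K \<longleftrightarrow> K \<noteq> {} \<and> compact K \<and> K = (\<Union>i\<in>{1..4}. koch_map i ` K)"

primrec koch_orbit :: "nat \<Rightarrow> complex set" where
  "koch_orbit 0 = {0}"
| "koch_orbit (Suc n) = (\<Union>i\<in>{1..4}. koch_map i ` koch_orbit n)"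

lemma koch_orbit_mono: "koch_orbit n \<subseteq> koch_orbit (Suc n)"
proof (induction n)
  case 0
  show ?case using koch_map_fixpoints(1) by force
next
  case (Suc n)
  have "(\<Union>i\<in>{1..4}. koch_map i ` koch_orbit n) \<subseteq> (\<Union>i\<in>{1..4}. koch_map i ` koch_orbit (Suc n))"
    by (intro UN_mono image_mono Suc.IH order.refl)
  then show ?case by (simp only: koch_orbit.simps(2)[of "Suc n"] koch_orbit.simps(2)[of n])
qed

lemma koch_orbit_subset_cball: "koch_orbit n \<subseteq> cball (1/2) (1/2)"
proof (induction n)
  case (Suc n)
  have "dist (koch_map i z) (1/2) \<le> 1/2" if "z \<in> koch_orbit n" for i z
    using Suc that dist_koch_map_half[of i z] by (auto simp: dist_commute)
  then show ?case by (auto simp: dist_commute)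
qed (simp add: dist_norm)

lemma koch_orbits_invariant:
  "(\<Union>i\<in>{1..4}. koch_map i ` (\<Union>n. koch_orbit n)) = (\<Union>n. koch_orbit n)"
proof
  show "(\<Union>i\<in>{1..4}. koch_map i ` (\<Union>n. koch_orbit n)) \<subseteq> (\<Union>n. koch_orbit n)"
  proof clarify
    fix i n z assume "i \<in> {1..4::nat}" "z \<in> koch_orbit n"
    then have "koch_map i z \<in> koch_orbit (Suc n)" by auto
    then show "koch_map i z \<in> (\<Union>n. koch_orbit n)" by blast
  qed
  show "(\<Union>n. koch_orbit n) \<subseteq> (\<Union>i\<in>{1..4}. koch_map i ` (\<Union>n. koch_orbit n))"
  proof clarify
    fix n z assume "z \<in> koch_orbit n"
    then have "z \<in> koch_orbit (Suc n)" using koch_orbit_mono by blast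
    then obtain i y where "i \<in> {1..4}" "y \<in> koch_orbit n" "z = koch_map i y" by auto
    then show "z \<in> (\<Union>i\<in>{1..4}. koch_map i ` (\<Union>n. koch_orbit n))" by blast
  qed
qed

lemma closure_image_koch_map:
  assumes "bounded A"
  shows "koch_map i ` closure A = closure (koch_map i ` A)"
proof
  show "koch_map i ` closure A \<subseteq> closure (koch_map i ` A)"
    by (rule image_closure_subset[OF continuous_on_koch_map]) (simp_all add: closure_subset)
  have "closed (koch_map i ` closure A)"
    using assms by (intro compact_imp_closed compact_continuous_image continuous_on_koch_map)
      (simp add: compact_closure)
  then show "closure (koch_map i ` A) \<subseteq> koch_map i ` closure A"
    by (rule closure_minimal[rotated]) (use closure_subset in blast)
qed

lemma koch_invariant_exists: "\<exists>K. koch_invariant K"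
proof -
  define A where "A = (\<Union>n. koch_orbit n)"
  have "A \<subseteq> cball (1/2) (1/2)" unfolding A_def using koch_orbit_subset_cball by blast
  then have bA: "bounded A" using bounded_cball bounded_subset by blast
  have "0 \<in> A" unfolding A_def using koch_orbit.simps(1) by blast
  moreover have "(\<Union>i\<in>{1..4}. koch_map i ` closure A) = closure A"
  proof -
    have four: "{1..4::nat} = {1,2,3,4}" by auto
    have "(\<Union>i\<in>{1..4}. koch_map i ` closure A) = (\<Union>i\<in>{1,2,3,4}. closure (koch_map i ` A))"
      using closure_image_koch_map[OF bA] unfolding four by simp
    also have "\<dots> = closure (\<Union>i\<in>{1..4}. koch_map i ` A)"
      unfolding four by simp
    finally show ?thesis using koch_orbits_invariant by (simp add: A_def)
  qed
  ultimately have "koch_invariant (closure A)"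
    using bA closure_subset by (auto simp: koch_invariant_def compact_closure)
  then show ?thesis by blast
qed

lemma koch_curve_invariant: "koch_invariant koch_curve"
proof -
  have contr: "\<And>i x y. i \<in> {1..4} \<Longrightarrow> dist (koch_map i x) (koch_map i y) \<le> 1/3 * dist x y"
    by (simp add: dist_koch_map)
  have "koch_invariant K1 \<Longrightarrow> koch_invariant K2 \<Longrightarrow> K1 \<subseteq> K2" for K1 K2
    unfolding koch_invariant_def
    by (elim conjE, rule attractor_subset[OF contr]) (assumption | linarith)+
  then have "\<exists>!K. koch_invariant K" using koch_invariant_exists by (meson subset_antisym)
  then show ?thesis unfolding koch_curve_def koch_invariant_def[symmetric] by (rule theI')
qed

lemma koch_curve_nonempty: "koch_curve \<noteq> {}"
  and compact_koch_curve: "compact koch_curve"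
  and koch_curve_eq: "koch_curve = (\<Union>i\<in>{1..4}. koch_map i ` koch_curve)"
  using koch_curve_invariant unfolding koch_invariant_def by blast+

lemma closed_koch_curve: "closed koch_curve"
  by (rule compact_imp_closed[OF compact_koch_curve])

lemma koch_map_mem_koch_curve: "i \<in> {1..4} \<Longrightarrow> z \<in> koch_curve \<Longrightarrow> koch_map i z \<in> koch_curve"
  using koch_curve_eq by blast

lemma koch_curve_fixpoint:
  assumes "i \<in> {1..4}" "koch_map i p = p"
  shows "p \<in> koch_curve"
  by (rule contraction_fixpoint_mem[OF closed_koch_curve koch_curve_nonempty, of "koch_map i" "1/3"])
    (use assms koch_map_mem_koch_curve in \<open>auto simp: dist_koch_map\<close>)

lemma zero_mem_koch_curve: "0 \<in> koch_curve"
  using koch_curve_fixpoint[of 1 0] koch_map_fixpoints(1) by simp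

lemma one_mem_koch_curve: "1 \<in> koch_curve"
  using koch_curve_fixpoint[of 4 1] koch_map_fixpoints(2) by simp

definition koch_apex :: complex where "koch_apex = Complex (1/2) (sqrt 3 / 6)"

lemma koch_map_2_one: "koch_map 2 1 = koch_apex"
  by (simp add: complex_eq_iff Re_koch_map Im_koch_map koch_apex_def)

lemma koch_apex_mem_koch_curve: "koch_apex \<in> koch_curve"
  using koch_map_mem_koch_curve[of 2 1] one_mem_koch_curve koch_map_2_one by simp

lemma koch_curve_subset_cball: "koch_curve \<subseteq> cball (1/2) (1/2)"
proof -
  obtain k where k: "k \<in> koch_curve" "\<And>y. y \<in> koch_curve \<Longrightarrow> dist y (1/2) \<le> dist k (1/2)"
    using continuous_attains_sup[OF compact_koch_curve koch_curve_nonempty, of "\<lambda>x. dist x (1/2)"]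
    by (force intro: continuous_intros)
  obtain i k0 where ik: "k0 \<in> koch_curve" "k = koch_map i k0"
    using k(1) koch_curve_eq by blast
  have "dist k (1/2) \<le> 1/3 + dist k0 (1/2) / 3" using dist_koch_map_half ik(2) by simp
  also have "\<dots> \<le> 1/3 + dist k (1/2) / 3" using k(2)[OF ik(1)] by simp
  finally show ?thesis using k(2) by (force simp: dist_commute)
qed

section \<open>Bounds for the one-dimensional Hausdorff measure\<close>

lemma unit_interval_subinterval:
  fixes t :: real and m :: nat
  assumes "m \<ge> 1" "t \<in> {0..1}"
  obtains k where "k < m" "t \<in> {real k / m .. (real k + 1) / m}"
proof (cases "t = 1")
  case True
  then show ?thesis using assms(1) by (intro that[of "m - 1"]) (auto simp: of_nat_diff field_simps)
next
  case False
  define k where "k = nat \<lfloor>t * m\<rfloor>"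
  have tm: "0 \<le> t * m" "t * m < m" using assms False by auto
  have k: "real k \<le> t * m" "t * m < real k + 1" using tm by (simp_all add: k_def)
  then have "k < m" using tm by linarith
  moreover have "t \<in> {real k / m .. (real k + 1) / m}"
    using k assms(1) by (auto simp: field_simps)
  ultimately show ?thesis by (rule that)
qed

lemma hausdorff1_lipschitz_image_le:
  fixes g :: "real \<Rightarrow> complex"
  assumes lip: "lipschitz_on L {0..1} g"
  shows "hausdorff1 (g ` {0..1}) \<le> ennreal L"
  unfolding hausdorff1_def
proof (rule SUP_least)
  fix \<delta> :: real assume "\<delta> \<in> {0<..}"
  then have dp: "\<delta> > 0" by simp
  have L0: "0 \<le> L" using lip by (simp add: lipschitz_on_def)
  define m :: nat where "m = nat \<lceil>L / \<delta>\<rceil> + 1"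
  have m1: "m \<ge> 1" by (simp add: m_def)
  have "L / \<delta> \<le> real m" unfolding m_def by linarith
  then have Lm: "L / m \<le> \<delta>" using dp m1 by (simp add: field_simps)
  define I where "I k = {real k / m .. (real k + 1) / m}" for k
  define U where "U k = (if k < m then g ` I k else {})" for k
  have sub: "I k \<subseteq> {0..1}" if "k < m" for k
    using that m1 by (auto simp: I_def field_simps)
  have bU: "bounded (U k)" for k
    using compact_continuous_image[OF continuous_on_subset[OF lipschitz_on_continuous_on[OF lip] sub]]
    by (auto simp: U_def I_def compact_imp_bounded)
  have dU: "diameter (U k) \<le> L / m" for k
  proof (cases "k < m")
    case True
    have short: "dist a b \<le> 1 / m" if "a \<in> I k" "b \<in> I k" for a b
    proof -
      have "(real k + 1) / m - real k / m = 1 / m" by (simp add: diff_divide_distrib[symmetric])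
      then show ?thesis using that by (auto simp: I_def dist_real_def)
    qed
    have "dist (g a) (g b) \<le> L / m" if "a \<in> I k" "b \<in> I k" for a b
    proof -
      have "dist (g a) (g b) \<le> L * dist a b"
        using lip sub[OF True] that by (auto simp: lipschitz_on_def)
      also have "\<dots> \<le> L * (1 / m)" using short[OF that] L0 by (rule mult_left_mono)
      finally show ?thesis by simp
    qed
    then show ?thesis using True L0 by (auto simp: U_def dist_norm intro!: diameter_le)
  qed (use L0 in \<open>simp add: U_def\<close>)
  have cov: "g ` {0..1} \<subseteq> (\<Union>k. U k)"
  proof
    fix x assume "x \<in> g ` {0..1}"
    then obtain t where t: "t \<in> {0..1}" "x = g t" by blast
    obtain k where "k < m" "t \<in> I k"
      using unit_interval_subinterval[OF m1 t(1)] unfolding I_def by blast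
    then show "x \<in> (\<Union>k. U k)" using t by (auto simp: U_def)
  qed
  have "(\<Sum>k. ennreal (diameter (U k))) = (\<Sum>k<m. ennreal (diameter (U k)))"
    by (rule suminf_finite) (auto simp: U_def)
  also have "\<dots> \<le> (\<Sum>k<m. ennreal (L / m))"
    by (intro sum_mono ennreal_leI dU)
  also have "\<dots> = ennreal (real m) * ennreal (L / m)" by (simp add: ennreal_of_nat_eq_real_of_nat)
  also have "\<dots> = ennreal (real m * (L / m))" by (rule ennreal_mult[symmetric]) (use L0 in auto)
  also have "\<dots> = ennreal L" using m1 by simp
  finally have sum_le: "(\<Sum>k. ennreal (diameter (U k))) \<le> ennreal L" .
  have "U \<in> {U. g ` {0..1} \<subseteq> (\<Union>i. U i) \<and> (\<forall>i. bounded (U i) \<and> diameter (U i) \<le> \<delta>)}"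
    using cov bU order.trans[OF dU Lm] by blast
  then show "(INF U\<in>{U. g ` {0..1} \<subseteq> (\<Union>i. U i) \<and> (\<forall>i. bounded (U i) \<and> diameter (U i) \<le> \<delta>)}.
             \<Sum>i. ennreal (diameter (U i))) \<le> ennreal L"
    by (rule INF_lower2[where f="\<lambda>U. \<Sum>i. ennreal (diameter (U i))", OF _ sum_le])
qed

lemma hausdorff1_geI:
  assumes "\<delta> > 0"
    and "\<And>U. \<Gamma> \<subseteq> (\<Union>i. U i) \<Longrightarrow> (\<And>i. bounded (U i)) \<Longrightarrow> (\<And>i. diameter (U i) \<le> \<delta>)
          \<Longrightarrow> c \<le> (\<Sum>i. ennreal (diameter (U i)))"
  shows "c \<le> hausdorff1 \<Gamma>"
  unfolding hausdorff1_def
proof (rule SUP_upper2[of \<delta>])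
  show "\<delta> \<in> {0<..}" using assms(1) by simp
  show "c \<le> (INF U\<in>{U. \<Gamma> \<subseteq> (\<Union>i. U i) \<and> (\<forall>i. bounded (U i) \<and> diameter (U i) \<le> \<delta>)}.
             \<Sum>i. ennreal (diameter (U i)))"
    by (rule INF_greatest) (use assms(2) in auto)
qed

text \<open>Each set of the cover lies in an interval of twice its diameter, so Lebesgue measure
  bounds the length of a covered interval.\<close>
lemma interval_length_le_cover_diameters:
  fixes V :: "nat \<Rightarrow> real set"
  assumes ab: "a \<le> b" and cov: "{a..b} \<subseteq> (\<Union>i. V i)" and bV: "\<And>i. bounded (V i)"
  shows "ennreal (b - a) \<le> 2 * (\<Sum>i. ennreal (diameter (V i)))"
proof -
  define I where "I i = (if V i = {} then {} else {(SOME v. v \<in> V i) - diameter (V i) .. (SOME v. v \<in> V i) + diameter (V i)})" for i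
  have VI: "V i \<subseteq> I i" for i
  proof (cases "V i = {}")
    case False
    define v where "v = (SOME v. v \<in> V i)"
    have v: "v \<in> V i" using False unfolding v_def by (meson ex_in_conv someI_ex)
    show ?thesis
    proof
      fix x assume "x \<in> V i"
      then have "\<bar>x - v\<bar> \<le> diameter (V i)"
        using diameter_bounded_bound[OF bV _ v] by (simp add: dist_real_def)
      then show "x \<in> I i" using False by (simp add: I_def v_def[symmetric] abs_le_iff)
    qed
  qed (simp add: I_def)
  have mI: "emeasure lborel (I i) = 2 * ennreal (diameter (V i))" for i
    using diameter_ge_0[OF bV, of i] by (simp add: I_def ennreal_mult)
  have "ennreal (b - a) = emeasure lborel {a..b}" using ab by simp
  also have "\<dots> \<le> emeasure lborel (\<Union>i. I i)"
  proof (rule emeasure_mono)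
    show "{a..b} \<subseteq> (\<Union>i. I i)" using cov VI by blast
  qed (auto simp: I_def)
  also have "\<dots> \<le> (\<Sum>i. emeasure lborel (I i))"
    by (rule emeasure_subadditive_countably) (auto simp: I_def)
  also have "\<dots> = 2 * (\<Sum>i. ennreal (diameter (V i)))"
    by (simp add: mI)
  finally show ?thesis .
qed

lemma
  fixes \<phi> :: "'a::metric_space \<Rightarrow> real"
  assumes lip: "\<And>x y. \<bar>\<phi> x - \<phi> y\<bar> \<le> dist x y" and S: "bounded S"
  shows bounded_nonexpansive_image: "bounded (\<phi> ` S)"
    and diameter_nonexpansive_image_le: "diameter (\<phi> ` S) \<le> diameter S"
proof -
  obtain c R where cR: "S \<subseteq> cball c R" using S bounded_subset_cball by blast
  have "\<phi> ` S \<subseteq> cball (\<phi> c) R"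
  proof
    fix y assume "y \<in> \<phi> ` S"
    then obtain x where "x \<in> S" "y = \<phi> x" by blast
    then show "y \<in> cball (\<phi> c) R"
      using lip[of c x] cR by (auto simp: dist_real_def)
  qed
  then show "bounded (\<phi> ` S)" using bounded_cball bounded_subset by blast
  show "diameter (\<phi> ` S) \<le> diameter S"
  proof (rule diameter_le)
    show "\<phi> ` S \<noteq> {} \<or> 0 \<le> diameter S" using diameter_ge_0[OF S] by simp
    fix u v assume "u \<in> \<phi> ` S" "v \<in> \<phi> ` S"
    then obtain x y where "x \<in> S" "y \<in> S" "u = \<phi> x" "v = \<phi> y" by blast
    then show "norm (u - v) \<le> diameter S"
      using lip[of x y] diameter_bounded_bound[OF S, of x y] by simp
  qed
qed

lemma interval_in_image_le_cover_diameters: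
  fixes \<phi> :: "'a::metric_space \<Rightarrow> real"
  assumes lip: "\<And>x y. \<bar>\<phi> x - \<phi> y\<bar> \<le> dist x y"
    and cov: "\<Gamma> \<subseteq> (\<Union>i. U i)" and bU: "\<And>i. bounded (U i)"
    and ab: "a \<le> b" and img: "{a..b} \<subseteq> \<phi> ` (\<Gamma> \<inter> A)"
  shows "ennreal (b - a) \<le> 2 * (\<Sum>i. ennreal (diameter (U i \<inter> A)))"
proof -
  define V where "V i = \<phi> ` (U i \<inter> A)" for i
  have bUA: "bounded (U i \<inter> A)" for i using bU bounded_Int by blast
  have "{a..b} \<subseteq> (\<Union>i. V i)"
  proof
    fix t assume "t \<in> {a..b}"
    then obtain z where "z \<in> \<Gamma>" "z \<in> A" "t = \<phi> z" using img by blast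
    then obtain i where "z \<in> U i" using cov by blast
    then show "t \<in> (\<Union>i. V i)" using \<open>z \<in> A\<close> \<open>t = \<phi> z\<close> by (auto simp: V_def)
  qed
  then have "ennreal (b - a) \<le> 2 * (\<Sum>i. ennreal (diameter (V i)))"
    using interval_length_le_cover_diameters[OF ab] bounded_nonexpansive_image[OF lip bUA]
    by (simp add: V_def)
  also have "\<dots> \<le> 2 * (\<Sum>i. ennreal (diameter (U i \<inter> A)))"
    by (intro mult_left_mono suminf_le ennreal_leI)
      (auto simp: V_def diameter_nonexpansive_image_le[OF lip bUA])
  finally show ?thesis .
qed

lemma two_times_ennreal_half: "0 \<le> x \<Longrightarrow> 2 * ennreal (x / 2) = ennreal x"
  using ennreal_mult[of 2 "x / 2"] by simp

lemma connected_ball_cover_diameters: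
  fixes \<Gamma> :: "'a::metric_space set"
  assumes conn: "connected \<Gamma>" and pq: "p \<in> \<Gamma>" "q \<in> \<Gamma>" "\<rho> \<le> dist p q" "0 \<le> \<rho>"
    and cov: "\<Gamma> \<subseteq> (\<Union>i. U i)" and bU: "\<And>i. bounded (U i)"
  shows "ennreal \<rho> \<le> 2 * (\<Sum>i. ennreal (diameter (U i \<inter> cball p \<rho>)))"
proof -
  have lip: "\<bar>dist p x - dist p y\<bar> \<le> dist x y" for x y
    using abs_dist_diff_le[of x p y] by (simp add: dist_commute)
  have "connected ((\<lambda>z. dist p z) ` \<Gamma>)"
    by (rule connected_continuous_image[OF _ conn]) (intro continuous_intros)
  then have "{0..dist p q} \<subseteq> (\<lambda>z. dist p z) ` \<Gamma>"
    using connected_contains_Icc pq(1,2) by (metis dist_self image_eqI)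
  then have "{0..\<rho>} \<subseteq> (\<lambda>z. dist p z) ` (\<Gamma> \<inter> cball p \<rho>)"
    using pq(3) by force
  from interval_in_image_le_cover_diameters[OF lip cov bU pq(4) this] show ?thesis by simp
qed

lemma sum_diameters_separated_balls_le:
  fixes p :: "'w \<Rightarrow> 'a::metric_space"
  assumes W: "finite W"
    and sep: "\<And>w w'. w \<in> W \<Longrightarrow> w' \<in> W \<Longrightarrow> w \<noteq> w' \<Longrightarrow> 4 * \<rho> \<le> dist (p w) (p w')"
    and S: "bounded S" "diameter S \<le> \<rho>" and "0 < \<rho>"
  shows "(\<Sum>w\<in>W. ennreal (diameter (S \<inter> cball (p w) \<rho>))) \<le> ennreal (diameter S)"
proof (cases "\<exists>w0\<in>W. S \<inter> cball (p w0) \<rho> \<noteq> {}")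
  case True
  then obtain w0 x where w0: "w0 \<in> W" "x \<in> S" "dist (p w0) x \<le> \<rho>" by auto
  have other: "S \<inter> cball (p w) \<rho> = {}" if "w \<in> W" "w \<noteq> w0" for w
  proof (rule ccontr)
    assume "S \<inter> cball (p w) \<rho> \<noteq> {}"
    then obtain y where y: "y \<in> S" "dist (p w) y \<le> \<rho>" by auto
    have "dist x y \<le> \<rho>" using diameter_bounded_bound[OF S(1) w0(2) y(1)] S(2) by simp
    then have "dist (p w0) (p w) \<le> 3 * \<rho>"
      using dist_triangle[of "p w0" "p w" x] dist_triangle[of x "p w" y] w0(3) y(2)
      by (simp add: dist_commute)
    then show False using sep[OF w0(1) that(1)] that(2) \<open>0 < \<rho>\<close> by auto
  qed
  have "(\<Sum>w\<in>W. ennreal (diameter (S \<inter> cball (p w) \<rho>))) = ennreal (diameter (S \<inter> cball (p w0) \<rho>))"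
    using W w0(1) other by (subst sum.remove[of _ w0]) (auto intro!: sum.neutral)
  also have "\<dots> \<le> ennreal (diameter S)"
    using diameter_subset[OF _ S(1), of "S \<inter> cball (p w0) \<rho>"] by (simp add: ennreal_leI)
  finally show ?thesis .
qed (simp add: sum.neutral)

text \<open>Balls of radius \<open>\<rho>\<close> around points \<open>4\<rho>\<close> apart are disjoint and each meets the curve in a
  piece of length at least \<open>\<rho>\<close>; covering sets of diameter \<open>\<le> \<rho>\<close> meet at most one of them.\<close>
lemma hausdorff1_ge_separated_points:
  fixes p :: "'w \<Rightarrow> complex"
  assumes conn: "connected \<Gamma>" and W: "finite W" "card W \<ge> 2" and p\<Gamma>: "\<And>w. w \<in> W \<Longrightarrow> p w \<in> \<Gamma>"
    and sep: "\<And>w w'. w \<in> W \<Longrightarrow> w' \<in> W \<Longrightarrow> w \<noteq> w' \<Longrightarrow> 4 * \<rho> \<le> dist (p w) (p w')"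
    and \<rho>: "\<rho> > 0"
  shows "ennreal (real (card W) * \<rho> / 2) \<le> hausdorff1 \<Gamma>"
proof (rule hausdorff1_geI[OF \<rho>])
  fix U :: "nat \<Rightarrow> complex set"
  assume cov: "\<Gamma> \<subseteq> (\<Union>i. U i)" and bU: "\<And>i. bounded (U i)" and dU: "\<And>i. diameter (U i) \<le> \<rho>"
  have each: "ennreal \<rho> \<le> 2 * (\<Sum>i. ennreal (diameter (U i \<inter> cball (p w) \<rho>)))" if w: "w \<in> W" for w
  proof -
    obtain w' where w': "w' \<in> W" "w' \<noteq> w"
      using W by (metis card_le_Suc0_iff_eq not_less_eq_eq numeral_2_eq_2)
    have "\<rho> \<le> dist (p w) (p w')" using sep[OF w w'(1)] w'(2) \<rho> by auto
    then show ?thesis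
      using connected_ball_cover_diameters[OF conn p\<Gamma>[OF w] p\<Gamma>[OF w'(1)] _ _ cov bU] \<rho> by simp
  qed
  have "ennreal (real (card W) * \<rho>) = (\<Sum>w\<in>W. ennreal \<rho>)"
    using \<rho> by (simp add: ennreal_of_nat_eq_real_of_nat ennreal_mult)
  also have "\<dots> \<le> (\<Sum>w\<in>W. 2 * (\<Sum>i. ennreal (diameter (U i \<inter> cball (p w) \<rho>))))"
    using each by (rule sum_mono)
  also have "\<dots> = 2 * (\<Sum>i. \<Sum>w\<in>W. ennreal (diameter (U i \<inter> cball (p w) \<rho>)))"
    by (simp add: sum_distrib_left suminf_sum)
  also have "\<dots> \<le> 2 * (\<Sum>i. ennreal (diameter (U i)))"
    using sum_diameters_separated_balls_le[OF W(1) sep bU dU \<rho>]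
    by (intro mult_left_mono suminf_le) simp_all
  finally have "2 * ennreal (real (card W) * \<rho> / 2) \<le> 2 * (\<Sum>i. ennreal (diameter (U i)))"
    using two_times_ennreal_half[of "real (card W) * \<rho>"] \<rho> by simp
  then show "ennreal (real (card W) * \<rho> / 2) \<le> (\<Sum>i. ennreal (diameter (U i)))"
    by (simp add: ennreal_mult_le_mult_iff)
qed

lemma hausdorff1_ge_Re_diff:
  assumes conn: "connected \<Gamma>" and ab: "a \<in> \<Gamma>" "b \<in> \<Gamma>" "Re a \<le> Re b"
  shows "ennreal ((Re b - Re a) / 2) \<le> hausdorff1 \<Gamma>"
proof (rule hausdorff1_geI[of 1])
  fix U :: "nat \<Rightarrow> complex set" assume cov: "\<Gamma> \<subseteq> (\<Union>i. U i)" and bU: "\<And>i. bounded (U i)"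
  have lip: "\<bar>Re x - Re y\<bar> \<le> dist x y" for x y
    using abs_Re_le_cmod[of "x - y"] by (simp add: dist_norm)
  have "connected (Re ` \<Gamma>)" by (rule connected_continuous_image[OF _ conn]) (intro continuous_intros)
  then have "{Re a..Re b} \<subseteq> Re ` (\<Gamma> \<inter> UNIV)" using connected_contains_Icc ab by blast
  from interval_in_image_le_cover_diameters[OF lip cov bU ab(3) this]
  have "2 * ennreal ((Re b - Re a) / 2) \<le> 2 * (\<Sum>i. ennreal (diameter (U i)))"
    using two_times_ennreal_half[of "Re b - Re a"] ab(3) by simp
  then show "ennreal ((Re b - Re a) / 2) \<le> (\<Sum>i. ennreal (diameter (U i)))"
    by (simp add: ennreal_mult_le_mult_iff)
qed simp

section \<open>Upper bound: polygonal approximations of the curve\<close>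

text \<open>Sweeping the angle \<open>3\<pi>\<close>, the seed joins \<open>0\<close> to \<open>1\<close>, so the four pieces of the next level join
  up, and its image is the whole circle with diameter \<open>[0,1]\<close>.\<close>
primrec koch_approx :: "nat \<Rightarrow> real \<Rightarrow> complex" where
  "koch_approx 0 t = 1/2 - (1/2) * cis (3 * pi * t)"
| "koch_approx (Suc n) t =
     (if t \<le> 1/4 then koch_map 1 (koch_approx n (4*t))
      else if t \<le> 1/2 then koch_map 2 (koch_approx n (4*t - 1))
      else if t \<le> 3/4 then koch_map 3 (koch_approx n (4*t - 2))
      else koch_map 4 (koch_approx n (4*t - 3)))"

lemma koch_approx_0_1: "koch_approx n 0 = 0" "koch_approx n 1 = 1"
proof (induction n)
  case 0
  have "cis (3 * pi) = -1"
    using cos_npi[of 3] sin_npi[of 3] by (simp add: cis.ctr complex_eq_iff)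
  then show "koch_approx 0 0 = 0" "koch_approx 0 1 = 1" by simp_all
qed (simp_all add: koch_map_def)

lemma koch_approx_Suc:
  assumes "c < 4" "real c / 4 \<le> t" "t \<le> (real c + 1) / 4"
  shows "koch_approx (Suc n) t = koch_map (c + 1) (koch_approx n (4 * t - real c))"
proof -
  note ends = koch_approx_0_1[of n] and num = numeral_eq_Suc pred_numeral_simps
  consider "c = 0" | "c = 1" | "c = 2" | "c = 3" using assms(1) by linarith
  then show ?thesis
  proof cases
    case 1
    then show ?thesis using assms by simp
  next
    case 2
    show ?thesis
    proof (cases "t = 1/4")
      case True
      show ?thesis unfolding True using 2 ends koch_map_endpoints(1) by (simp add: num)
    qed (use 2 assms in \<open>simp add: num\<close>)
  next
    case 3
    show ?thesis
    proof (cases "t = 1/2")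
      case True
      show ?thesis unfolding True using 3 ends koch_map_endpoints(2) by (simp add: num)
    qed (use 3 assms in \<open>simp add: num\<close>)
  next
    case 4
    show ?thesis
    proof (cases "t = 3/4")
      case True
      show ?thesis unfolding True using 4 ends koch_map_endpoints(3) by (simp add: num)
    qed (use 4 assms in \<open>simp add: num\<close>)
  qed
qed

lemma norm_cis_diff_le: "norm (cis a - cis b) \<le> \<bar>a - b\<bar>"
proof -
  have "(norm (cis a - cis b))^2 = (cos a - cos b)^2 + (sin a - sin b)^2"
    by (simp add: cmod_power2 cis.ctr)
  also have "\<dots> = 2 - 2 * cos (a - b)"
    by (simp add: cos_diff power2_eq_square algebra_simps)
  also have "cos (a - b) = 1 - 2 * (sin ((a - b) / 2))^2"
    using cos_double_sin[of "(a - b) / 2"] by (metis mult_2 field_sum_of_halves)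
  also have "2 - 2 * (1 - 2 * (sin ((a - b) / 2))^2) = 4 * (sin ((a - b) / 2))^2" by simp
  also have "\<dots> \<le> 4 * ((a - b) / 2)^2"
    using abs_sin_x_le_abs_x[of "(a - b) / 2"] by (simp add: abs_le_square_iff[symmetric])
  also have "\<dots> = (\<bar>a - b\<bar>)^2" by (simp add: power2_eq_square)
  finally show ?thesis by (simp add: abs_le_square_iff[symmetric])
qed

lemma lipschitz_on_koch_approx_0: "lipschitz_on (3 * pi / 2) {0..1} (koch_approx 0)"
  unfolding lipschitz_on_def
proof (intro conjI ballI)
  fix x y :: real
  have e: "koch_approx 0 x - koch_approx 0 y = (cis (3*pi*y) - cis (3*pi*x)) / 2"
    by (simp add: field_simps)
  have "dist (koch_approx 0 x) (koch_approx 0 y) = norm (cis (3*pi*x) - cis (3*pi*y)) / 2"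
    unfolding dist_norm e by (simp add: norm_divide norm_minus_commute)
  also have "\<dots> \<le> \<bar>3*pi*x - 3*pi*y\<bar> / 2" using norm_cis_diff_le by (intro divide_right_mono) auto
  also have "3*pi*x - 3*pi*y = 3*pi*(x - y)" by (simp add: algebra_simps)
  also have "\<bar>3*pi*(x - y)\<bar> / 2 = 3 * pi / 2 * dist x y" by (simp add: abs_mult dist_real_def)
  finally show "dist (koch_approx 0 x) (koch_approx 0 y) \<le> 3 * pi / 2 * dist x y" .
qed simp

lemma lipschitz_on_koch_approx_Suc_piece:
  assumes c: "c < 4" and lip: "lipschitz_on L {0..1} (koch_approx n)"
  shows "lipschitz_on (4 * L / 3) {real c / 4 .. (real c + 1) / 4} (koch_approx (Suc n))"
  unfolding lipschitz_on_def
proof (intro conjI ballI)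
  show "0 \<le> 4 * L / 3" using lip by (simp add: lipschitz_on_def)
  fix x y assume xy: "x \<in> {real c / 4 .. (real c + 1) / 4}" "y \<in> {real c / 4 .. (real c + 1) / 4}"
  then have in01: "4*x - c \<in> {0..1}" "4*y - c \<in> {0..1}" by auto
  have "dist (koch_approx (Suc n) x) (koch_approx (Suc n) y)
      = dist (koch_approx n (4*x - c)) (koch_approx n (4*y - c)) / 3"
    using xy by (simp add: koch_approx_Suc[OF c] dist_koch_map del: koch_approx.simps)
  also have "\<dots> \<le> L * dist (4*x - c) (4*y - c) / 3"
    using lip in01 unfolding lipschitz_on_def by (intro divide_right_mono) (blast, simp)
  also have "dist (4*x - c) (4*y - c) = \<bar>4 * (x - y)\<bar>" by (simp add: dist_real_def algebra_simps)
  also have "L * \<bar>4 * (x - y)\<bar> / 3 = 4 * L / 3 * dist x y"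
    by (simp only: abs_mult dist_real_def)
  finally show "dist (koch_approx (Suc n) x) (koch_approx (Suc n) y) \<le> 4 * L / 3 * dist x y" .
qed

lemma lipschitz_on_self_concat:
  fixes f :: "real \<Rightarrow> 'a::metric_space"
  assumes "lipschitz_on L {a..b} f" "lipschitz_on L {b..c} f"
  shows "lipschitz_on L {a..c} f"
  using lipschitz_on_concat[OF assms refl] by simp

lemma lipschitz_on_koch_approx: "lipschitz_on (3 * pi / 2 * (4/3)^n) {0..1} (koch_approx n)"
proof (induction n)
  case (Suc n)
  have piece: "lipschitz_on (3 * pi / 2 * (4/3)^Suc n) {real c / 4 .. (real c + 1) / 4} (koch_approx (Suc n))"
    if "c < 4" for c
    using lipschitz_on_koch_approx_Suc_piece[OF that Suc.IH] by (simp add: field_simps del: koch_approx.simps)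
  have "lipschitz_on (3 * pi / 2 * (4/3)^Suc n) {0..1/4} (koch_approx (Suc n))"
    and "lipschitz_on (3 * pi / 2 * (4/3)^Suc n) {1/4..1/2} (koch_approx (Suc n))"
    and "lipschitz_on (3 * pi / 2 * (4/3)^Suc n) {1/2..3/4} (koch_approx (Suc n))"
    and "lipschitz_on (3 * pi / 2 * (4/3)^Suc n) {3/4..1} (koch_approx (Suc n))"
    using piece[of 0] piece[of 1] piece[of 2] piece[of 3] by (simp_all del: koch_approx.simps)
  note p = this
  show ?case
    by (rule lipschitz_on_self_concat[OF lipschitz_on_self_concat[OF lipschitz_on_self_concat[OF p(1,2)] p(3)] p(4)])
qed (simp add: lipschitz_on_koch_approx_0 del: koch_approx.simps)

lemma rectifiable_curve_koch_approx: "rectifiable_curve (koch_approx n ` {0..1})"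
  unfolding rectifiable_curve_def using lipschitz_on_koch_approx by blast

lemma sphere_subset_koch_approx_0: "sphere (1/2) (1/2) \<subseteq> koch_approx 0 ` {0..1}"
proof
  fix y :: complex assume "y \<in> sphere (1/2) (1/2)"
  then have "norm (1/2 - y) = 1/2" by (simp add: dist_norm)
  moreover have "1 - 2 * y = 2 * (1/2 - y)" by simp
  then have "norm (1 - 2 * y) = 2 * norm (1/2 - y)" by (simp only: norm_mult norm_numeral)
  ultimately have "norm (1 - 2 * y) = 1" by simp
  then have "(Re (1 - 2 * y))^2 + (Im (1 - 2 * y))^2 = 1" by (simp add: cmod_def)
  then obtain \<theta> where th: "0 \<le> \<theta>" "\<theta> < 2*pi" "Re (1 - 2 * y) = cos \<theta>" "Im (1 - 2 * y) = sin \<theta>"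
    using sincos_total_2pi by metis
  then have "koch_approx 0 (\<theta> / (3*pi)) = y"
    by (simp add: cis.ctr complex_eq_iff field_simps)
  moreover have "\<theta> / (3*pi) \<in> {0..1}" using th by (auto simp: field_simps)
  ultimately show "y \<in> koch_approx 0 ` {0..1}" by force
qed

lemma exists_dist_sphere:
  fixes c x :: complex
  assumes "0 \<le> e"
  shows "\<exists>y\<in>sphere c e. dist x y = \<bar>dist x c - e\<bar>"
proof (cases "x = c")
  case True
  then show ?thesis by (intro bexI[of _ "c + of_real e"]) (auto simp: dist_norm assms)
next
  case False
  define d where "d = dist x c"
  have d: "d > 0" using False by (simp add: d_def)
  define y where "y = c + of_real (e / d) * (x - c)"
  have nxc: "norm (x - c) = d" by (simp add: d_def dist_norm)
  have "x - y = of_real ((d - e) / d) * (x - c)"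
    using d by (simp add: y_def field_simps)
  then have "dist x y = \<bar>(d - e) / d\<bar> * d" by (simp only: dist_norm norm_mult norm_of_real nxc)
  also have "\<dots> = \<bar>d - e\<bar>" using d by (simp add: abs_divide)
  finally have "dist x y = \<bar>d - e\<bar>" .
  moreover have "c - y = - (of_real (e / d) * (x - c))" by (simp add: y_def)
  then have "dist c y = \<bar>e / d\<bar> * d" by (simp only: dist_norm norm_minus_cancel norm_mult norm_of_real nxc)
  then have "dist c y = e" using d assms by (simp add: abs_divide)
  ultimately show ?thesis by (auto simp: d_def)
qed

lemma koch_approx_0_near:
  assumes "s \<in> koch_curve" "1 \<le> \<rho>" "dist x s \<le> \<rho>"
  shows "\<exists>t\<in>{0..1}. dist x (koch_approx 0 t) \<le> \<rho>"
proof -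
  obtain y where y: "y \<in> sphere (1/2) (1/2)" "dist x y = \<bar>dist x (1/2) - 1/2\<bar>"
    using exists_dist_sphere[of "1/2" "1/2" x] by auto
  have "dist s (1/2) \<le> 1/2" using assms(1) koch_curve_subset_cball by (auto simp: dist_commute)
  then have "dist x (1/2) \<le> \<rho> + 1/2" using dist_triangle[of x "1/2" s] assms(3) by linarith
  then have "dist x y \<le> \<rho>" using y(2) assms(2) zero_le_dist[of x "1/2"] by arith
  then show ?thesis using sphere_subset_koch_approx_0 y(1) by blast
qed

lemma koch_approx_near:
  "s \<in> koch_curve \<Longrightarrow> (1/3)^n \<le> \<rho> \<Longrightarrow> dist x s \<le> \<rho> \<Longrightarrow> \<exists>t\<in>{0..1}. dist x (koch_approx n t) \<le> \<rho>"
proof (induction n arbitrary: s x \<rho>)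
  case 0
  then show ?case using koch_approx_0_near by (simp del: koch_approx.simps)
next
  case (Suc n)
  obtain i s' where is': "i \<in> {1..4}" "s' \<in> koch_curve" "s = koch_map i s'"
    using Suc.prems(1) koch_curve_eq by blast
  obtain x' where x': "koch_map i x' = x" using koch_map_surj by (metis surjD)
  have "dist x' s' \<le> 3 * \<rho>" using dist_koch_map[of i x' s'] x' is'(3) Suc.prems(3) by simp
  moreover have "(1/3)^n \<le> 3 * \<rho>" using Suc.prems(2) by simp
  ultimately obtain t' where t': "t' \<in> {0..1}" "dist x' (koch_approx n t') \<le> 3 * \<rho>"
    using Suc.IH[OF is'(2)] by blast
  define c where "c = i - 1"
  have c: "c < 4" "i = c + 1" using is'(1) by (auto simp: c_def)
  have "koch_approx (Suc n) ((t' + c) / 4) = koch_map (c + 1) (koch_approx n (4 * ((t' + c) / 4) - c))"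
    by (rule koch_approx_Suc) (use t'(1) c(1) in auto)
  moreover have "4 * ((t' + c) / 4) - c = t'" by (simp add: field_simps)
  ultimately have "koch_approx (Suc n) ((t' + c) / 4) = koch_map i (koch_approx n t')"
    using c(2) by (simp only:)
  moreover have "dist x (koch_map i (koch_approx n t')) \<le> \<rho>"
    using dist_koch_map[of i x' "koch_approx n t'"] x' t'(2) by simp
  moreover have "(t' + c) / 4 \<in> {0..1}" using t'(1) c(1) by auto
  ultimately show ?case by (intro bexI[of _ "(t' + c) / 4"]) simp_all
qed

lemma Lambda_koch_le_approx:
  assumes "(1/3)^n \<le> r"
  shows "Lambda (nbhd koch_curve r) r \<le> ennreal (3 * pi / 2 * (4/3)^n)"
proof -
  define \<Gamma> where "\<Gamma> = koch_approx n ` {0..1}"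
  have "nbhd koch_curve r \<subseteq> nbhd \<Gamma> r"
  proof
    fix x assume x: "x \<in> nbhd koch_curve r"
    obtain s where s: "s \<in> koch_curve" "infdist x koch_curve = dist x s"
      using infdist_attains_inf[OF closed_koch_curve koch_curve_nonempty] by metis
    then have "dist x s \<le> r" using x by (simp add: nbhd_def)
    then obtain t where "t \<in> {0..1}" "dist x (koch_approx n t) \<le> r"
      using koch_approx_near[OF s(1) assms] by blast
    then have "infdist x \<Gamma> \<le> r" by (intro infdist_le2[of "koch_approx n t"]) (auto simp: \<Gamma>_def)
    then show "x \<in> nbhd \<Gamma> r" by (simp add: nbhd_def)
  qed
  then have "Lambda (nbhd koch_curve r) r \<le> hausdorff1 \<Gamma>"
    unfolding Lambda_def using rectifiable_curve_koch_approx by (intro INF_lower) (auto simp: \<Gamma>_def)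
  also have "\<dots> \<le> ennreal (3 * pi / 2 * (4/3)^n)"
    unfolding \<Gamma>_def by (rule hausdorff1_lipschitz_image_le[OF lipschitz_on_koch_approx])
  finally show ?thesis .
qed

section \<open>Lower bound: well separated points of the curve\<close>

text \<open>The triangle with vertices \<open>0\<close>, \<open>1\<close> and \<open>koch_apex\<close>.\<close>
definition koch_triangle :: "complex set" where
  "koch_triangle = {z. 0 \<le> Im z \<and> sqrt 3 * Im z \<le> Re z \<and> sqrt 3 * Im z \<le> 1 - Re z}"

lemma koch_triangle_bounds:
  assumes "z \<in> koch_triangle"
  shows "0 \<le> Im z" "0 \<le> Re z" "Re z \<le> 1" "0 \<le> sqrt 3 * Im z" "sqrt 3 * Im z \<le> Re z"
    "Re z + sqrt 3 * Im z \<le> 1" "sqrt 3 * Re z \<le> sqrt 3" "0 \<le> sqrt 3 * Re z"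
proof -
  have a: "0 \<le> Im z" "sqrt 3 * Im z \<le> Re z" "sqrt 3 * Im z \<le> 1 - Re z"
    using assms by (auto simp: koch_triangle_def)
  show b: "0 \<le> Im z" "0 \<le> sqrt 3 * Im z" "sqrt 3 * Im z \<le> Re z" "Re z + sqrt 3 * Im z \<le> 1"
    using a by simp_all
  show "0 \<le> Re z" "Re z \<le> 1" using b by linarith+
  then show "sqrt 3 * Re z \<le> sqrt 3" "0 \<le> sqrt 3 * Re z" by simp_all
qed

lemma koch_map_triangle: "z \<in> koch_triangle \<Longrightarrow> koch_map i z \<in> koch_triangle"
proof -
  assume z: "z \<in> koch_triangle"
  define x y where "x = Re z" and "y = Im z"
  note f = koch_triangle_bounds[OF z, folded x_def y_def]
  have "i = 1 \<or> i = 2 \<or> i = 3 \<or> (i \<noteq> 1 \<and> i \<noteq> 2 \<and> i \<noteq> 3)" by blast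
  then show ?thesis
  proof (elim disjE conjE)
    assume "i = 1"
    then have "Re (koch_map i z) = x/3" "sqrt 3 * Im (koch_map i z) = sqrt 3 * y / 3"
      "Im (koch_map i z) = y/3"
      by (simp_all add: Re_koch_map Im_koch_map x_def y_def)
    then show ?thesis unfolding koch_triangle_def mem_Collect_eq using f by linarith
  next
    assume "i = 2"
    then have "Re (koch_map i z) = 1/3 + x/6 - sqrt 3 * y / 6"
      "sqrt 3 * Im (koch_map i z) = x/2 + sqrt 3 * y / 6" "Im (koch_map i z) = sqrt 3 * x / 6 + y / 6"
      by (simp_all add: Re_koch_map Im_koch_map x_def y_def field_simps)
    then show ?thesis unfolding koch_triangle_def mem_Collect_eq using f by linarith
  next
    assume "i = 3"
    then have "Re (koch_map i z) = 1/2 + x/6 + sqrt 3 * y / 6"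
      "sqrt 3 * Im (koch_map i z) = 1/2 - x/2 + sqrt 3 * y / 6"
      "Im (koch_map i z) = sqrt 3 / 6 - sqrt 3 * x / 6 + y / 6"
      by (simp_all add: Re_koch_map Im_koch_map x_def y_def field_simps)
    then show ?thesis unfolding koch_triangle_def mem_Collect_eq using f by linarith
  next
    assume "i \<noteq> 1" "i \<noteq> 2" "i \<noteq> 3"
    then have "Re (koch_map i z) = 2/3 + x/3" "sqrt 3 * Im (koch_map i z) = sqrt 3 * y / 3"
      "Im (koch_map i z) = y/3"
      by (simp_all add: Re_koch_map Im_koch_map x_def y_def)
    then show ?thesis unfolding koch_triangle_def mem_Collect_eq using f by linarith
  qed
qed

lemma norm_le_sqrt_sum_squares: "0 \<le> c \<Longrightarrow> (Re w)^2 + (Im w)^2 \<le> c^2 \<Longrightarrow> norm w \<le> c"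
  unfolding cmod_def by (rule real_le_lsqrt)

lemma koch_triangle_norm_bounds:
  assumes z: "z \<in> koch_triangle"
  shows "norm (z - 1) \<le> 2 * (1 - Re z)" "norm (z - 1) \<le> 1 - Re z + sqrt 3 * Im z"
    "norm z \<le> 2 * Re z"
proof -
  define x y where "x = Re z" and "y = Im z"
  note f = koch_triangle_bounds[OF z, folded x_def y_def]
  have sq: "(sqrt 3 * y)^2 = 3 * y^2" by (simp add: power_mult_distrib)
  have a1: "(sqrt 3 * y)^2 \<le> x^2" using f by (intro power_mono) auto
  have a2: "(sqrt 3 * y)^2 \<le> (1 - x)^2" using f by (intro power_mono) auto
  have p: "0 \<le> (1 - x) * (sqrt 3 * y)" using f by (intro mult_nonneg_nonneg) linarith+
  have e1: "(Re (z - 1))^2 + (Im (z - 1))^2 = (1 - x)^2 + y^2"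
    by (simp add: x_def y_def power2_eq_square algebra_simps)
  have e2: "(Re z)^2 + (Im z)^2 = x^2 + y^2" by (simp add: x_def y_def)
  have q1: "(2*(1-x))^2 = 4*(1-x)^2" "(2*x)^2 = 4*x^2" by (simp_all add: power2_eq_square algebra_simps)
  have q2: "(1 - x + sqrt 3 * y)^2 = (1-x)^2 + 2 * ((1 - x) * (sqrt 3 * y)) + (sqrt 3 * y)^2"
    by (simp add: power2_eq_square algebra_simps)
  show "norm (z - 1) \<le> 2 * (1 - Re z)"
  proof (rule norm_le_sqrt_sum_squares)
    show "0 \<le> 2 * (1 - Re z)" using f by (simp add: x_def)
    show "(Re (z - 1))^2 + (Im (z - 1))^2 \<le> (2 * (1 - Re z))^2"
      unfolding e1 x_def[symmetric] using q1 a2 sq zero_le_power2[of "1-x"] zero_le_power2[of y] by linarith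
  qed
  show "norm (z - 1) \<le> 1 - Re z + sqrt 3 * Im z"
  proof (rule norm_le_sqrt_sum_squares)
    show "0 \<le> 1 - Re z + sqrt 3 * Im z" using f by (simp add: x_def y_def)
    show "(Re (z - 1))^2 + (Im (z - 1))^2 \<le> (1 - Re z + sqrt 3 * Im z)^2"
      unfolding e1 x_def[symmetric] y_def[symmetric] using q2 p sq zero_le_power2[of y] by linarith
  qed
  show "norm z \<le> 2 * Re z"
  proof (rule norm_le_sqrt_sum_squares)
    show "0 \<le> 2 * Re z" using f by (simp add: x_def)
    show "(Re z)^2 + (Im z)^2 \<le> (2 * Re z)^2"
      unfolding e2 x_def[symmetric] y_def[symmetric] using q1 a1 sq zero_le_power2[of x] zero_le_power2[of y] by linarith
  qed
qed

lemma norm_koch_map_1: "norm (koch_map 1 z) = norm z / 3"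
  using dist_koch_map[of 1 z 0] koch_map_fixpoints(1) by (simp add: dist_norm)

lemma norm_koch_map_4_sub_1: "norm (koch_map 4 z - 1) = norm (z - 1) / 3"
  using dist_koch_map[of 4 z 1] koch_map_fixpoints(2) by (simp add: dist_norm)

text \<open>The last three bounds keep a point that is far from a vertex shared with a neighbouring
  piece horizontally away from that piece.\<close>
lemma koch_map_triangle_Re_bounds:
  assumes z: "z \<in> koch_triangle"
  shows "Re (koch_map 1 z) \<le> 1/3" "1/3 \<le> Re (koch_map 2 z)" "Re (koch_map 2 z) \<le> 1/2"
    "1/2 \<le> Re (koch_map 3 z)" "Re (koch_map 3 z) \<le> 2/3" "2/3 \<le> Re (koch_map 4 z)"
    "Re (koch_map 1 z) + norm (z - 1) / 6 \<le> 1/3"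
    "Re (koch_map 2 z) + norm (z - 1) / 6 \<le> 1/2"
    "2/3 + norm z / 6 \<le> Re (koch_map 4 z)"
proof -
  define x y where "x = Re z" and "y = Im z"
  note f = koch_triangle_bounds[OF z, folded x_def y_def]
  have r: "Re (koch_map 1 z) = x/3" "Re (koch_map 2 z) = 1/3 + x/6 - sqrt 3 * y / 6"
    "Re (koch_map 3 z) = 1/2 + x/6 + sqrt 3 * y / 6" "Re (koch_map 4 z) = 2/3 + x/3"
    by (simp_all add: Re_koch_map x_def y_def field_simps)
  note d = koch_triangle_norm_bounds[OF z, folded x_def y_def]
  show "Re (koch_map 1 z) \<le> 1/3" "1/3 \<le> Re (koch_map 2 z)" "Re (koch_map 2 z) \<le> 1/2"
    "1/2 \<le> Re (koch_map 3 z)" "Re (koch_map 3 z) \<le> 2/3" "2/3 \<le> Re (koch_map 4 z)"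
    "Re (koch_map 1 z) + norm (z - 1) / 6 \<le> 1/3"
    "Re (koch_map 2 z) + norm (z - 1) / 6 \<le> 1/2"
    "2/3 + norm z / 6 \<le> Re (koch_map 4 z)"
    using r d f by linarith+
qed

lemma koch_map_triangle_separated:
  assumes ij: "i \<in> {1..4}" "j \<in> {1..4}" "i < j"
    and z: "z \<in> koch_triangle" "e \<le> norm (z - 1)" and z': "z' \<in> koch_triangle" "e \<le> norm z'"
    and e: "e \<le> 1"
  shows "e / 6 \<le> norm (koch_map i z - koch_map j z')"
proof -
  note A = koch_map_triangle_Re_bounds[OF z(1)] and B = koch_map_triangle_Re_bounds[OF z'(1)]
  have "(i = 1 \<and> j = 2) \<or> (i = 1 \<and> j = 3) \<or> (i = 1 \<and> j = 4) \<or> (i = 2 \<and> j = 3) \<or>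
        (i = 2 \<and> j = 4) \<or> (i = 3 \<and> j = 4)" using ij by auto
  then have "Re (koch_map i z) + e/6 \<le> Re (koch_map j z')"
    using A B z(2) z'(2) e by (elim disjE conjE) simp_all
  then show ?thesis
    using abs_Re_le_cmod[of "koch_map j z' - koch_map i z"] by (simp add: norm_minus_commute)
qed

definition koch_words :: "nat \<Rightarrow> nat list set" where
  "koch_words m = {w. set w \<subseteq> {1..4} \<and> length w = m}"

lemma finite_koch_words: "finite (koch_words m)"
  and card_koch_words: "card (koch_words m) = 4 ^ m"
  unfolding koch_words_def by (simp_all add: finite_lists_length_eq card_lists_length_eq)

lemma koch_words_Suc:
  "w \<in> koch_words (Suc m) \<Longrightarrow> \<exists>i u. w = i # u \<and> i \<in> {1..4} \<and> u \<in> koch_words m"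
  unfolding koch_words_def by (cases w) auto

lemma foldr_koch_map_mem_koch_curve:
  "set w \<subseteq> {1..4} \<Longrightarrow> z \<in> koch_curve \<Longrightarrow> foldr koch_map w z \<in> koch_curve"
  by (induction w) (auto intro: koch_map_mem_koch_curve)

lemma koch_word_points_triangle:
  "w \<in> koch_words m \<Longrightarrow> foldr koch_map w koch_apex \<in> koch_triangle
     \<and> (1/2) * (1/3)^m \<le> norm (foldr koch_map w koch_apex)
     \<and> (1/2) * (1/3)^m \<le> norm (foldr koch_map w koch_apex - 1)"
proof (induction m arbitrary: w)
  case 0
  have "1/2 \<le> norm koch_apex" "1/2 \<le> norm (koch_apex - 1)"
    unfolding cmod_def by (rule real_le_rsqrt; simp add: koch_apex_def power2_eq_square)+
  then show ?case using 0 by (simp add: koch_words_def koch_triangle_def koch_apex_def)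
next
  case (Suc m)
  obtain i u where iu: "w = i # u" "i \<in> {1..4}" "u \<in> koch_words m"
    using koch_words_Suc[OF Suc.prems] by blast
  define z where "z = foldr koch_map u koch_apex"
  have z: "z \<in> koch_triangle" "(1/2) * (1/3)^m \<le> norm z" "(1/2) * (1/3)^m \<le> norm (z - 1)"
    using Suc.IH[OF iu(3)] by (simp_all add: z_def)
  have "(1/3::real)^m \<le> 1" by (rule power_le_one) auto
  have "(1/2) * (1/3)^Suc m \<le> norm (koch_map i z)"
  proof (cases "i = 1")
    case True then show ?thesis unfolding True norm_koch_map_1 using z(2) by simp
  next
    case False
    then have "1/3 \<le> Re (koch_map i z)"
      using iu(2) koch_map_triangle_Re_bounds[OF z(1)] by (auto simp: atLeastAtMost_iff le_Suc_eq numeral_eq_Suc)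
    then show ?thesis using abs_Re_le_cmod[of "koch_map i z"] \<open>(1/3)^m \<le> 1\<close> by simp
  qed
  moreover have "(1/2) * (1/3)^Suc m \<le> norm (koch_map i z - 1)"
  proof (cases "i = 4")
    case True then show ?thesis unfolding True norm_koch_map_4_sub_1 using z(3) by simp
  next
    case False
    then have "Re (koch_map i z) \<le> 2/3"
      using iu(2) koch_map_triangle_Re_bounds[OF z(1)] by (auto simp: atLeastAtMost_iff le_Suc_eq numeral_eq_Suc)
    then show ?thesis using abs_Re_le_cmod[of "koch_map i z - 1"] \<open>(1/3)^m \<le> 1\<close> by simp
  qed
  ultimately show ?case using koch_map_triangle[OF z(1)] iu(1) by (simp add: z_def)
qed

lemma koch_word_points_separated:
  "w \<in> koch_words m \<Longrightarrow> w' \<in> koch_words m \<Longrightarrow> w \<noteq> w' \<Longrightarrow>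
     (1/4) * (1/3)^m \<le> norm (foldr koch_map w koch_apex - foldr koch_map w' koch_apex)"
proof (induction m arbitrary: w w')
  case 0
  then show ?case by (simp add: koch_words_def)
next
  case (Suc m)
  obtain i u where iu: "w = i # u" "i \<in> {1..4}" "u \<in> koch_words m"
    using koch_words_Suc[OF Suc.prems(1)] by blast
  obtain j u' where ju: "w' = j # u'" "j \<in> {1..4}" "u' \<in> koch_words m"
    using koch_words_Suc[OF Suc.prems(2)] by blast
  define e :: real where "e = (1/2) * (1/3)^m"
  have "(1/3::real)^m \<le> 1" by (rule power_le_one) auto
  then have e1: "e \<le> 1" by (simp add: e_def)
  have Pu: "foldr koch_map u koch_apex \<in> koch_triangle" "e \<le> norm (foldr koch_map u koch_apex)"
      "e \<le> norm (foldr koch_map u koch_apex - 1)"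
    and Pu': "foldr koch_map u' koch_apex \<in> koch_triangle" "e \<le> norm (foldr koch_map u' koch_apex)"
      "e \<le> norm (foldr koch_map u' koch_apex - 1)"
    using koch_word_points_triangle[OF iu(3)] koch_word_points_triangle[OF ju(3)] unfolding e_def by blast+
  have "e / 6 \<le> norm (koch_map i (foldr koch_map u koch_apex) - koch_map j (foldr koch_map u' koch_apex))"
  proof (cases "i = j")
    case True
    then have "u \<noteq> u'" using Suc.prems(3) iu(1) ju(1) by simp
    moreover have "norm (koch_map i (foldr koch_map u koch_apex) - koch_map i (foldr koch_map u' koch_apex))
        = norm (foldr koch_map u koch_apex - foldr koch_map u' koch_apex) / 3"
      using dist_koch_map[of i] by (simp add: dist_norm)
    ultimately show ?thesis unfolding True[symmetric] using Suc.IH[OF iu(3) ju(3)] e_def by linarith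
  next
    case False
    then consider "i < j" | "j < i" by linarith
    then show ?thesis
    proof cases
      case 1
      show ?thesis by (rule koch_map_triangle_separated[OF iu(2) ju(2) 1 Pu(1,3) Pu'(1,2) e1])
    next
      case 2
      from koch_map_triangle_separated[OF ju(2) iu(2) 2 Pu'(1,3) Pu(1,2) e1]
      show ?thesis by (simp add: norm_minus_commute)
    qed
  qed
  then show ?case using iu(1) ju(1) by (simp add: e_def)
qed

lemma rectifiable_curve_compact: "rectifiable_curve \<Gamma> \<Longrightarrow> compact \<Gamma>"
  and rectifiable_curve_connected: "rectifiable_curve \<Gamma> \<Longrightarrow> connected \<Gamma>"
  and rectifiable_curve_nonempty: "rectifiable_curve \<Gamma> \<Longrightarrow> \<Gamma> \<noteq> {}"
  unfolding rectifiable_curve_def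
  by (auto intro!: compact_continuous_image connected_continuous_image lipschitz_on_continuous_on)

lemma rectifiable_curve_near:
  assumes "rectifiable_curve \<Gamma>" "nbhd koch_curve r \<subseteq> nbhd \<Gamma> r" "infdist x koch_curve \<le> r"
  obtains y where "y \<in> \<Gamma>" "dist x y \<le> r"
proof -
  have "infdist x \<Gamma> \<le> r" using assms(2,3) by (auto simp: nbhd_def)
  moreover obtain y where "y \<in> \<Gamma>" "infdist x \<Gamma> = dist x y"
    using infdist_attains_inf[OF compact_imp_closed[OF rectifiable_curve_compact] rectifiable_curve_nonempty]
      assms(1) by metis
  ultimately show ?thesis using that by auto
qed

lemma Lambda_koch_ge_half:
  assumes r: "0 < r"
  shows "ennreal (1/2) \<le> Lambda (nbhd koch_curve r) r"
  unfolding Lambda_def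
proof (rule INF_greatest, clarify)
  fix \<Gamma> assume rc: "rectifiable_curve \<Gamma>" and nb: "nbhd koch_curve r \<subseteq> nbhd \<Gamma> r"
  have "infdist (- of_real r) koch_curve \<le> r"
    using infdist_le[OF zero_mem_koch_curve, of "- of_real r"] r by (simp add: dist_norm)
  then obtain a where a: "a \<in> \<Gamma>" "dist (- of_real r) a \<le> r" using rectifiable_curve_near[OF rc nb] by blast
  have "infdist (1 + of_real r) koch_curve \<le> r"
    using infdist_le[OF one_mem_koch_curve, of "1 + of_real r"] r by (simp add: dist_norm)
  then obtain b where b: "b \<in> \<Gamma>" "dist (1 + of_real r) b \<le> r" using rectifiable_curve_near[OF rc nb] by blast
  have "\<bar>Re a + r\<bar> \<le> r" "\<bar>1 + r - Re b\<bar> \<le> r"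
    using abs_Re_le_cmod[of "a + of_real r"] abs_Re_le_cmod[of "1 + of_real r - b"] a(2) b(2)
    by (simp_all add: dist_norm norm_minus_commute add.commute)
  then have "Re a \<le> 0" "1 \<le> Re b" by linarith+
  then have "ennreal (1/2) \<le> ennreal ((Re b - Re a) / 2)" by (intro ennreal_leI) simp
  also have "\<dots> \<le> hausdorff1 \<Gamma>"
    using hausdorff1_ge_Re_diff[OF rectifiable_curve_connected[OF rc] a(1) b(1)] \<open>Re a \<le> 0\<close> \<open>1 \<le> Re b\<close>
    by simp
  finally show "ennreal (1/2) \<le> hausdorff1 \<Gamma>" .
qed

text \<open>The \<open>4^m\<close> points of level \<open>m\<close> are \<open>(1/4) 3^-m \<ge> 6r\<close> apart, so any curve passing within \<open>r\<close>
  of each of them picks up points \<open>4r\<close> apart.\<close>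
lemma Lambda_koch_ge_level:
  assumes r: "0 < r" and m: "1 \<le> m" and rm: "24 * r * 3^m \<le> 1"
  shows "ennreal (4^m * r / 2) \<le> Lambda (nbhd koch_curve r) r"
  unfolding Lambda_def
proof (rule INF_greatest, clarify)
  fix \<Gamma> assume rc: "rectifiable_curve \<Gamma>" and nb: "nbhd koch_curve r \<subseteq> nbhd \<Gamma> r"
  define W where "W = koch_words m"
  define q where "q w = foldr koch_map w koch_apex" for w
  have qK: "q w \<in> koch_curve" if "w \<in> W" for w
    using that foldr_koch_map_mem_koch_curve[OF _ koch_apex_mem_koch_curve] by (auto simp: W_def koch_words_def q_def)
  have "\<exists>y\<in>\<Gamma>. dist (q w) y \<le> r" if "w \<in> W" for w
  proof -
    have "infdist (q w) koch_curve \<le> r" using qK[OF that] r by simp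
    then obtain y where "y \<in> \<Gamma>" "dist (q w) y \<le> r" by (rule rectifiable_curve_near[OF rc nb])
    then show ?thesis by blast
  qed
  then obtain p where p: "\<And>w. w \<in> W \<Longrightarrow> p w \<in> \<Gamma> \<and> dist (q w) (p w) \<le> r" by metis
  have sep: "4 * r \<le> dist (p w) (p w')" if "w \<in> W" "w' \<in> W" "w \<noteq> w'" for w w'
  proof -
    have "6 * r \<le> (1/4) * (1/3)^m" using rm by (simp add: power_one_over field_simps)
    also have "\<dots> \<le> dist (q w) (q w')"
      using koch_word_points_separated that by (simp add: W_def q_def dist_norm)
    also have "\<dots> \<le> dist (q w) (p w) + dist (p w) (p w') + dist (p w') (q w')"
      by (meson dist_triangle order.trans add_mono order.refl)
    finally show ?thesis using p[OF that(1)] p[OF that(2)] by (simp add: dist_commute)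
  qed
  have "(4::nat) ^ 1 \<le> 4 ^ m" using m by (intro power_increasing) auto
  then have card: "2 \<le> card W" by (simp add: W_def card_koch_words)
  have fin: "finite W" by (simp add: W_def finite_koch_words)
  have p\<Gamma>: "\<And>w. w \<in> W \<Longrightarrow> p w \<in> \<Gamma>" using p by blast
  have "ennreal (real (card W) * r / 2) \<le> hausdorff1 \<Gamma>"
    by (rule hausdorff1_ge_separated_points[OF rectifiable_curve_connected[OF rc] fin card p\<Gamma> sep r])
  then show "ennreal (4^m * r / 2) \<le> hausdorff1 \<Gamma>" by (simp add: W_def card_koch_words)
qed

section \<open>Choosing the level\<close>

lemma exists_level_upper:
  fixes r :: real
  assumes r: "0 < r" "r < 1"
  shows "\<exists>n. (1/3)^n \<le> r \<and> (4/3)^n \<le> 4/3 * r powr (1 - log 3 4)"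
proof -
  define u where "u = - ln r"
  have u: "0 < u" using r by (simp add: u_def)
  have l3: "0 < ln (3::real)" "ln (3::real) < ln 4" by simp_all
  define n where "n = nat \<lceil>u / ln 3\<rceil>"
  have n1: "u / ln 3 \<le> real n" unfolding n_def by linarith
  have n2: "real n \<le> u / ln 3 + 1"
    using u l3 of_int_ceiling_le_add_one[of "u / ln 3"] unfolding n_def by simp
  have "(1/3::real)^n = exp (real n * ln (1/3))" by (simp add: exp_of_nat_mult)
  also have "\<dots> = exp (- (real n * ln 3))" by (simp add: ln_div)
  also have "\<dots> \<le> exp (- u)" using n1 l3 by (simp add: field_simps)
  also have "exp (- u) = r" using r by (simp add: u_def)
  finally have "(1/3)^n \<le> r" .
  moreover have "(4/3::real)^n \<le> 4/3 * r powr (1 - log 3 4)"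
  proof -
    have "(4/3::real)^n = exp (real n * ln (4/3))" by (simp add: exp_of_nat_mult)
    also have "\<dots> = exp (real n * (ln 4 - ln 3))" by (simp add: ln_div)
    also have "\<dots> \<le> exp ((u / ln 3 + 1) * (ln 4 - ln 3))"
      using n2 l3 by (intro exp_mono mult_right_mono) auto
    also have "(u / ln 3 + 1) * (ln 4 - ln 3) = (ln 4 - ln 3) + (1 - log 3 4) * ln r"
      using l3 by (simp add: log_def u_def field_simps)
    also have "exp ((ln 4 - ln 3) + (1 - log 3 4) * ln r) = 4/3 * r powr (1 - log 3 4)"
      using r by (simp add: exp_add exp_diff powr_def ln_div mult.commute)
    finally show ?thesis .
  qed
  ultimately show ?thesis by blast
qed

lemma exists_level_lower:
  fixes r :: real
  assumes r: "0 < r" "r \<le> 1/72"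
  shows "\<exists>m::nat. 1 \<le> m \<and> 24 * r * 3^m \<le> 1 \<and> r powr (1 - log 3 4) / 72 powr log 3 4 \<le> 4^m * r"
proof -
  define u where "u = - ln r"
  have l3: "0 < ln (3::real)" by simp
  have l72: "ln (72::real) = ln 24 + ln 3" using ln_mult[of 24 3] by simp
  have "ln r \<le> ln (1/72)" using r by simp
  then have u72: "ln 72 \<le> u" by (simp add: u_def ln_div)
  define t where "t = (u - ln 24) / ln 3"
  have t1: "1 \<le> t" using u72 l3 l72 by (simp add: t_def field_simps)
  define m where "m = nat \<lfloor>t\<rfloor>"
  have m: "1 \<le> m" "real m \<le> t" "t - 1 \<le> real m" using t1 unfolding m_def by linarith+
  have "(3::real)^m = exp (real m * ln 3)" by (simp add: exp_of_nat_mult)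
  also have "\<dots> \<le> exp (u - ln 24)" using m(2) l3 by (simp add: t_def field_simps)
  also have "\<dots> = 1 / (24 * r)" using r by (simp add: exp_diff u_def exp_minus field_simps)
  finally have "24 * r * 3^m \<le> 1" using r by (simp add: field_simps)
  moreover have "r powr (1 - log 3 4) / 72 powr log 3 4 \<le> 4^m * r"
  proof -
    have "r powr (1 - log 3 4) / 72 powr log 3 4 = exp ((1 - log 3 4) * ln r - log 3 4 * ln 72)"
      using r by (simp add: powr_def exp_diff)
    also have "(1 - log 3 4) * ln r - log 3 4 * ln 72 = (t - 1) * ln 4 - u"
      using l3 l72 by (simp add: log_def t_def u_def field_simps)
    also have "exp ((t - 1) * ln 4 - u) \<le> exp (real m * ln 4 - u)"
      using m(3) by (simp add: mult_right_mono)
    also have "\<dots> = 4^m * r"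
      using r by (simp add: exp_diff exp_add u_def exp_of_nat_mult)
    finally show ?thesis .
  qed
  ultimately show ?thesis using m(1) by blast
qed

lemma powr_le_for_large:
  fixes r :: real
  assumes r: "1/72 < r" "r < 1"
  shows "r powr (1 - log 3 4) \<le> 72 powr log 3 4"
proof -
  have d: "1 < log 3 (4::real)" by simp
  have "1/72 \<le> r" using r by simp
  then have "r powr (1 - log 3 4) \<le> (1/72) powr (1 - log 3 4)"
    using d by (intro powr_mono2') auto
  also have "\<dots> = 72 powr (log 3 4 - 1)"
    using powr_minus_divide[of 72 "1 - log 3 4"] by (simp add: powr_divide)
  also have "\<dots> \<le> 72 powr log 3 4" by simp
  finally show ?thesis .
qed

lemma Lambda_koch_upper:
  assumes "0 < r" "r < 1"
  shows "Lambda (nbhd koch_curve r) r \<le> ennreal (2 * pi * r powr (1 - log 3 4))"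
proof -
  obtain n where n: "(1/3)^n \<le> r" "(4/3)^n \<le> 4/3 * r powr (1 - log 3 4)"
    using exists_level_upper[OF assms] by blast
  have "Lambda (nbhd koch_curve r) r \<le> ennreal (3 * pi / 2 * (4/3)^n)"
    by (rule Lambda_koch_le_approx[OF n(1)])
  also have "\<dots> \<le> ennreal (2 * pi * r powr (1 - log 3 4))"
    using mult_left_mono[OF n(2), of "3 * pi / 2"] by (intro ennreal_leI) simp
  finally show ?thesis .
qed

lemma Lambda_koch_lower:
  assumes r: "0 < r" "r < 1"
  shows "ennreal (r powr (1 - log 3 4) / (2 * 72 powr log 3 4)) \<le> Lambda (nbhd koch_curve r) r"
proof (cases "r \<le> 1/72")
  case True
  then obtain m :: nat where m: "1 \<le> m" "24 * r * 3^m \<le> 1"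
      "r powr (1 - log 3 4) / 72 powr log 3 4 \<le> 4^m * r"
    using exists_level_lower[OF r(1)] by blast
  then have "ennreal (r powr (1 - log 3 4) / (2 * 72 powr log 3 4)) \<le> ennreal (4^m * r / 2)"
    by (intro ennreal_leI) (simp add: field_simps)
  also have "\<dots> \<le> Lambda (nbhd koch_curve r) r" by (rule Lambda_koch_ge_level[OF r(1) m(1,2)])
  finally show ?thesis .
next
  case False
  then have "r powr (1 - log 3 4) \<le> 72 powr log 3 4" using powr_le_for_large r by simp
  then have "ennreal (r powr (1 - log 3 4) / (2 * 72 powr log 3 4)) \<le> ennreal (1/2)"
    by (intro ennreal_leI) (simp add: field_simps)
  also have "\<dots> \<le> Lambda (nbhd koch_curve r) r" by (rule Lambda_koch_ge_half[OF r(1)])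
  finally show ?thesis .
qed

theorem corollary3p6:
  fixes \<alpha> :: real
  defines "\<alpha> \<equiv> log 4 3"
  shows "\<exists>C::real. C > 1 \<and> (\<forall>r::real. 0 < r \<and> r < 1 \<longrightarrow>
           ennreal ((1 / C) * r powr ((\<alpha> - 1) / \<alpha>)) \<le> Lambda (nbhd koch_curve r) r \<and>
           Lambda (nbhd koch_curve r) r \<le> ennreal (C * r powr ((\<alpha> - 1) / \<alpha>)))"
proof -
  have exponent: "(\<alpha> - 1) / \<alpha> = 1 - log 3 4"
    by (simp add: \<alpha>_def log_def field_simps)
  define C where "C = max 8 (2 * 72 powr log 3 4)"
  have C: "1 < C" "2 * pi \<le> C" "2 * 72 powr log 3 4 \<le> C"
    using pi_less_4 by (auto simp: C_def)
  have "ennreal ((1 / C) * r powr (1 - log 3 4)) \<le> Lambda (nbhd koch_curve r) r \<and>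
        Lambda (nbhd koch_curve r) r \<le> ennreal (C * r powr (1 - log 3 4))" if r: "0 < r" "r < 1" for r
  proof
    have "(1 / C) * r powr (1 - log 3 4) \<le> r powr (1 - log 3 4) / (2 * 72 powr log 3 4)"
      using C(3) by (simp add: frac_le)
    then show "ennreal ((1 / C) * r powr (1 - log 3 4)) \<le> Lambda (nbhd koch_curve r) r"
      using Lambda_koch_lower[OF r] by (meson ennreal_leI order.trans)
    have "2 * pi * r powr (1 - log 3 4) \<le> C * r powr (1 - log 3 4)"
      using C(2) by (simp add: mult_right_mono)
    then show "Lambda (nbhd koch_curve r) r \<le> ennreal (C * r powr (1 - log 3 4))"
      using Lambda_koch_upper[OF r] by (meson ennreal_leI order.trans)
  qed
  then show ?thesis unfolding exponent using C(1) by blast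
qed

end
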